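(* Let $p$ be a prime and $r$ a positive integer. Then $p\in F_r$ if and only if $r<p<(p_{b(r)+1}-r)(p_{b(r)+2}-r)+r$.
   Context: $p_i$ denotes the $i$-th prime. For a positive integer $r$, $S_r$ is the multiplicative arithmetic function with $S_r(q^{\alpha})=0$ if $q\leq r$ and $S_r(q^{\alpha})=q^{\alpha-1}(q-r)$ if $q>r$, for all primes $q$ and positive integers $\alpha$. $B_r=\{n\in\mathbb{N}: S_r(n)>0\}$ (positive integers whose smallest prime factor exceeds $r$, together with $1$). $F_r$ is the set of $n\in B_r$ such that $S_r(n)<S_r(m)$ for all $m\in B_r$ with $m>n$. $b(1)=0$, and for $r\geq 2$, $b(r)$ is the largest integer with $p_{b(r)}\leq r$. *)

theory Defs
  imports "HOL-Computational_Algebra.Primes" "HOL-Library.Infinite_Set"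
begin

text \<open>The i-th prime, 1-indexed: nth_prime 1 = 2, nth_prime 2 = 3, ...\<close>
definition nth_prime :: "nat \<Rightarrow> nat" where
  "nth_prime i = enumerate {p::nat. prime p} (i - 1)"

definition S :: "nat \<Rightarrow> nat \<Rightarrow> nat" where
  "S r n = (\<Prod>q\<in>prime_factors n.
      (if q \<le> r then 0 else q ^ (multiplicity q n - 1) * (q - r)))"

definition B :: "nat \<Rightarrow> nat set" where
  "B r = {n. n > 0 \<and> S r n > 0}"

definition F :: "nat \<Rightarrow> nat set" where
  "F r = {n \<in> B r. \<forall>m \<in> B r. m > n \<longrightarrow> S r n < S r m}"

definition b :: "nat \<Rightarrow> nat" where
  "b r = (if r = 1 then 0 else (GREATEST k. k \<ge> 1 \<and> nth_prime k \<le> r))"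

end

theory Submission
  imports Defs "HOL.Binomial_Plus" "HOL-Library.Discrete_Functions"
begin

text \<open>For a prime p > r we have S_r(p) = p - r. Let q1 < q2 be the two smallest primes
above r, that is p_(b(r)+1) and p_(b(r)+2). Every m in B_r other than 1 that is not prime has
S_r(m) \<ge> (q1 - r)(q2 - r): either m has two distinct prime factors, all of them \<ge> q1 and the
larger one \<ge> q2, or m = q^v with v \<ge> 2 and S_r(m) \<ge> q (q - r), where q \<ge> q1 \<ge> q2 - r because
(r, 2r+1] contains two primes. Hence every prime p with r < p < (q1 - r)(q2 - r) + r lies in F_r.
Conversely, for larger p the number m = q1 q2 or, if that is not larger than p, m = q1 x with
x a prime in (p div q1, 2 (p div q1)] satisfies m > p and S_r(m) \<le> p - r, because q1 \<le> 2r.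

Two primes in (n, 2n+1] are obtained from Erdos' proof of Bertrand's postulate for n \<ge> 2048
(with at most one prime in (n, 2n] the central binomial coefficient would be too small) and
from an explicit chain of primes below.\<close>

section \<open>Two primes between n and 2n+1 for small n\<close>

lemma prime_nat_by_trial_division:
  fixes p s :: nat
  assumes "2 \<le> p" and "p < (s+1)*(s+1)" and no_divisor: "\<forall>d\<in>{2..s}. d < p \<longrightarrow> \<not> d dvd p"
  shows "prime p"
proof (rule ccontr)
  assume "\<not> prime p"
  then obtain d where "d dvd p" "d \<noteq> 1" "d \<noteq> p"
    using assms(1) by (auto simp: prime_nat_iff)
  then obtain e where p: "p = d * e" "d \<noteq> 1" "e \<noteq> 1" by (auto elim: dvdE)
  have "2 \<le> d" using p assms(1) by (metis One_nat_def less_2_cases mult_0 not_le)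
  have "2 \<le> e" using p assms(1) by (metis One_nat_def less_2_cases mult_0_right not_le)
  define c where "c = min d e"
  have "c dvd p" "2 \<le> c" "c < p"
    using p \<open>2 \<le> d\<close> \<open>2 \<le> e\<close> unfolding c_def min_def by auto
  moreover have "c \<le> s"
  proof (rule ccontr)
    assume "\<not> c \<le> s"
    then have "(s+1)*(s+1) \<le> d * e" unfolding c_def by (intro mult_le_mono) auto
    with assms(2) p show False by simp
  qed
  ultimately show False using no_divisor by auto
qed

fun bertrand_chain :: "nat list \<Rightarrow> bool" where
  "bertrand_chain (x # y # z # zs) =
     (x < y \<and> y < z \<and> z \<le> 2*x+1 \<and> bertrand_chain (y # z # zs))"
| "bertrand_chain _ = True"

lemma two_primes_in_bertrand_chain:
  assumes "bertrand_chain xs" "\<forall>p\<in>set xs. prime p" "3 \<le> length xs"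
    and "hd xs \<le> n" "n < xs ! (length xs - 2)"
  shows "\<exists>p1 p2. prime p1 \<and> prime p2 \<and> n < p1 \<and> p1 < p2 \<and> p2 \<le> 2*n+1"
  using assms
proof (induction xs rule: bertrand_chain.induct)
  case (1 x y z zs)
  show ?case
  proof (cases "n < y")
    case True
    then show ?thesis using "1.prems" by (intro exI[of _ y] exI[of _ z]) auto
  next
    case False
    show ?thesis
    proof (cases zs)
      case Nil
      then show ?thesis using "1.prems"(5) False by simp
    next
      case Cons
      then show ?thesis using "1.IH" "1.prems"(1,2,5) False by (simp add: nth_Cons')
    qed
  qed
qed auto

lemma two_primes_between_small:
  fixes n :: nat
  assumes "1 \<le> n" "n < 2179"
  shows "\<exists>p1 p2. prime p1 \<and> prime p2 \<and> n < p1 \<and> p1 < p2 \<and> p2 \<le> 2*n+1"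
proof (cases "n = 1")
  case True
  then show ?thesis by (intro exI[of _ "2::nat"] exI[of _ "3::nat"]) simp
next
  case False
  define xs :: "nat list" where "xs = [2, 3, 5, 7, 11, 13, 19, 23, 37, 47, 73, 89, 139, 179, 277,
    359, 547, 719, 1093, 1439, 2179, 2879]"
  have "bertrand_chain xs" by (simp add: xs_def)
  moreover have "\<forall>p\<in>set xs. prime p"
    unfolding xs_def list.set ball_simps simp_thms
    by (intro conjI; rule prime_nat_by_trial_division[where s = 53]; simp add: atLeastAtMost_upt upt_rec)
  ultimately show ?thesis
    by (rule two_primes_in_bertrand_chain) (use assms False in \<open>simp_all add: xs_def\<close>)
qed

section \<open>Erdos' argument\<close>

lemma prod_le_prod_superset_nat:
  fixes f :: "'a \<Rightarrow> nat"
  assumes "finite Y" "X \<subseteq> Y" "\<And>x. x \<in> Y - X \<Longrightarrow> 1 \<le> f x"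
  shows "prod f X \<le> prod f Y"
proof -
  have "1 \<le> prod f (Y - X)" using assms(3) by (intro prod_ge_1) auto
  then have "1 * prod f X \<le> prod f (Y - X) * prod f X" by (rule mult_le_mono1)
  also have "\<dots> = prod f Y" by (rule prod.subset_diff[OF assms(2,1), symmetric])
  finally show ?thesis by simp
qed

lemma multiplicity_fact:
  fixes p :: nat
  assumes p: "prime p" and "m < p ^ K"
  shows "multiplicity p (fact m :: nat) = (\<Sum>i\<in>{1..K}. m div p ^ i)"
  using assms(2)
proof (induction m)
  case (Suc m)
  have p_pow_pos: "0 < p ^ i" for i using prime_gt_0_nat[OF p] by simp
  have dvd_iff: "p ^ i dvd Suc m \<longleftrightarrow> i \<le> multiplicity p (Suc m)" for i
    by (rule power_dvd_iff_le_multiplicity) (use p in auto)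
  have "p ^ multiplicity p (Suc m) \<le> Suc m"
    by (intro dvd_imp_le multiplicity_dvd) simp
  then have "p ^ multiplicity p (Suc m) < p ^ K" using Suc.prems by linarith
  then have "multiplicity p (Suc m) < K"
    using prime_gt_1_nat[OF p] by (simp add: power_strict_increasing_iff)
  then have "{i\<in>{1..K}. p ^ i dvd Suc m} = {1..multiplicity p (Suc m)}"
    by (auto simp: dvd_iff)
  then have "(\<Sum>i\<in>{1..K}. if p ^ i dvd Suc m then 1 else 0) = multiplicity p (Suc m)"
    using sum.inter_filter[of "{1..K}" "\<lambda>_. 1::nat" "\<lambda>i. p ^ i dvd Suc m"] by simp
  moreover have "Suc m div p ^ i = m div p ^ i + (if p ^ i dvd Suc m then 1 else 0)" for i
    using p_pow_pos[of i] by (simp add: div_Suc dvd_eq_mod_eq_0)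
  ultimately have "(\<Sum>i\<in>{1..K}. Suc m div p ^ i) = (\<Sum>i\<in>{1..K}. m div p ^ i) + multiplicity p (Suc m)"
    by (simp add: sum.distrib)
  moreover have "multiplicity p (fact (Suc m) :: nat) = multiplicity p (Suc m) + multiplicity p (fact m :: nat)"
    unfolding fact_Suc of_nat_id by (rule prime_elem_multiplicity_mult_distrib) (use p in auto)
  ultimately show ?case using Suc by simp
qed simp

lemma double_div_bounds:
  fixes n d :: nat
  shows "2 * (n div d) \<le> (2 * n) div d" and "(2 * n) div d \<le> 2 * (n div d) + 1"
proof -
  have "(2 * n) div d = 2 * (n div d) + (2 * (n mod d)) div d"
    by (simp add: mult_2 div_add1_eq[of n n d])
  moreover have "(2 * (n mod d)) div d \<le> 1"
  proof (cases "d = 0")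
    case False
    then have "2 * (n mod d) < 2 * d" by simp
    then have "(2 * (n mod d)) div d < 2" by (rule less_mult_imp_div_less)
    then show ?thesis by simp
  qed simp
  ultimately show "2 * (n div d) \<le> (2 * n) div d" "(2 * n) div d \<le> 2 * (n div d) + 1"
    by simp_all
qed

lemma multiplicity_central_binomial:
  fixes p n :: nat
  assumes p: "prime p"
  shows "multiplicity p ((2*n) choose n) = (\<Sum>i\<in>{1..2*n}. (2*n) div p ^ i - 2 * (n div p ^ i))"
proof -
  have "2*n < 2 ^ (2*n)" by (rule less_exp)
  also have "\<dots> \<le> p ^ (2*n)" using prime_ge_2_nat[OF p] by (simp add: power_mono)
  finally have large: "2*n < p ^ (2*n)" .
  have fact_eq: "fact n * fact n * ((2*n) choose n) = (fact (2*n) :: nat)"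
    using binomial_fact_lemma[of n "2*n"] by simp
  have "multiplicity p (fact (2*n) :: nat)
      = multiplicity p (fact n * fact n :: nat) + multiplicity p ((2*n) choose n)"
    unfolding fact_eq[symmetric] by (rule prime_elem_multiplicity_mult_distrib) (use p in auto)
  also have "multiplicity p (fact n * fact n :: nat) = 2 * multiplicity p (fact n :: nat)"
    by (subst prime_elem_multiplicity_mult_distrib) (use p in auto)
  finally have "multiplicity p (fact (2*n) :: nat)
      = 2 * multiplicity p (fact n :: nat) + multiplicity p ((2*n) choose n)" .
  moreover have "(\<Sum>i\<in>{1..2*n}. (2*n) div p ^ i)
      = 2 * (\<Sum>i\<in>{1..2*n}. n div p ^ i) + (\<Sum>i\<in>{1..2*n}. (2*n) div p ^ i - 2 * (n div p ^ i))"
    using double_div_bounds(1) by (simp add: sum_distrib_left sum.distrib[symmetric])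
  ultimately show ?thesis
    using multiplicity_fact[OF p large] multiplicity_fact[OF p, of n "2*n"] large by simp
qed

lemma multiplicity_central_binomial_le:
  fixes p n j :: nat
  assumes p: "prime p" and "2*n < p ^ j"
  shows "multiplicity p ((2*n) choose n) \<le> j - 1"
proof -
  have "(2*n) div p ^ i - 2 * (n div p ^ i) \<le> (if i < j then 1 else 0)" for i
  proof (cases "i < j")
    case False
    then have "p ^ j \<le> p ^ i" using prime_gt_1_nat[OF p] by (simp add: power_increasing)
    then show ?thesis using assms(2) False by simp
  qed (use double_div_bounds(2)[of n "p ^ i"] in simp)
  then have "multiplicity p ((2*n) choose n) \<le> (\<Sum>i\<in>{1..2*n}. if i < j then 1 else 0)"
    unfolding multiplicity_central_binomial[OF p] by (rule sum_mono)
  also have "\<dots> = card {i\<in>{1..2*n}. i < j}"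
    using sum.inter_filter[of "{1..2*n}" "\<lambda>_. 1::nat" "\<lambda>i. i < j"] by simp
  also have "\<dots> \<le> card {1..<j}" by (intro card_mono) auto
  finally show ?thesis by simp
qed

lemma prime_power_multiplicity_central_binomial_le:
  fixes p n :: nat
  assumes p: "prime p" and "1 \<le> n"
  shows "p ^ multiplicity p ((2*n) choose n) \<le> 2*n"
proof (rule ccontr)
  let ?v = "multiplicity p ((2*n) choose n)"
  assume "\<not> p ^ ?v \<le> 2*n"
  then have "2*n < p ^ ?v" by simp
  with multiplicity_central_binomial_le[OF p this] assms(2) show False
    by (cases ?v) auto
qed

lemma multiplicity_central_binomial_eq_0:
  fixes p n :: nat
  assumes p: "prime p" and "2*n < p*p" "2*n < 3*p" "p \<le> n"
  shows "multiplicity p ((2*n) choose n) = 0"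
proof -
  have "(2*n) div p ^ i - 2 * (n div p ^ i) = 0" if "1 \<le> i" for i
  proof (cases "i = 1")
    case True
    have "n div p = 1" by (rule div_nat_eqI) (use assms(3,4) in presburger)+
    moreover have "(2*n) div p = 2" by (rule div_nat_eqI) (use assms(3,4) in presburger)+
    ultimately show ?thesis using True by simp
  next
    case False
    then have "p ^ 2 \<le> p ^ i" using that prime_gt_1_nat[OF p] by (simp add: power_increasing)
    then show ?thesis using assms(2) by (simp add: power2_eq_square)
  qed
  then show ?thesis by (simp add: multiplicity_central_binomial[OF p])
qed

lemma prime_power_multiplicity_central_binomial_bound:
  fixes p n :: nat
  assumes p: "prime p" and n: "1 \<le> n"
  shows "p ^ multiplicity p ((2*n) choose n) \<le>
    (if p*p \<le> 2*n then 2*n else 1) * (if 3*p \<le> 2*n then p else 1) * (if n < p then p else 1)"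
proof -
  let ?v = "multiplicity p ((2*n) choose n)"
  have p_pow_le: "p ^ ?v \<le> 2*n" by (rule prime_power_multiplicity_central_binomial_le[OF p n])
  have "1 \<le> p" using prime_ge_1_nat[OF p] .
  show ?thesis
  proof (cases "p*p \<le> 2*n")
    case True
    have "2*n \<le> 2*n * ((if 3*p \<le> 2*n then p else 1) * (if n < p then p else 1))"
      using \<open>1 \<le> p\<close> by simp
    with p_pow_le have "p ^ ?v \<le> 2*n * ((if 3*p \<le> 2*n then p else 1) * (if n < p then p else 1))"
      by (rule order.trans)
    then show ?thesis using True by (simp only: if_True mult.assoc)
  next
    case False
    with p_pow_le have "p ^ ?v < p ^ 2" by (simp add: power2_eq_square)
    then have "?v \<le> 1" using prime_gt_1_nat[OF p] by (simp add: power_strict_increasing_iff)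
    then have "p ^ ?v \<le> p" using \<open>1 \<le> p\<close> by (cases ?v) auto
    moreover have "?v = 0" if "\<not> 3*p \<le> 2*n" "p \<le> n"
      using multiplicity_central_binomial_eq_0[OF p] False that by simp
    ultimately show ?thesis using False \<open>1 \<le> p\<close> by auto
  qed
qed

lemma central_binomial_le_prime_products:
  fixes n :: nat
  assumes n: "1 \<le> n"
  shows "(2*n) choose n \<le> (2*n) ^ card {p. prime p \<and> p*p \<le> 2*n}
    * \<Prod>{p. prime p \<and> p \<le> 2*n div 3} * \<Prod>{p. prime p \<and> n < p \<and> p \<le> 2*n}"
proof -
  let ?C = "(2*n) choose n"
  let ?P = "{p::nat. prime p \<and> p \<le> 2*n}"
  let ?h = "\<lambda>p. (if p*p \<le> 2*n then 2*n else 1) * (if 3*p \<le> 2*n then p else 1) * (if n < p then p else 1)"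
  have fin: "finite ?P" by (rule finite_subset[of _ "{..2*n}"]) auto
  have "prime_factors ?C \<subseteq> ?P"
  proof
    fix p assume "p \<in> prime_factors ?C"
    then have p: "prime p" and "0 < multiplicity p ?C" by (auto simp: prime_factors_multiplicity)
    then have "p ^ 1 \<le> p ^ multiplicity p ?C" using prime_ge_1_nat[OF p] by (intro power_increasing) auto
    then show "p \<in> ?P" using prime_power_multiplicity_central_binomial_le[OF p n] p by simp
  qed
  have "?C = (\<Prod>p\<in>prime_factors ?C. p ^ multiplicity p ?C)"
    by (rule prime_factorization_nat) (simp add: zero_less_binomial)
  also have "\<dots> \<le> (\<Prod>p\<in>prime_factors ?C. ?h p)"
    by (intro prod_mono conjI zero_le prime_power_multiplicity_central_binomial_bound[OF _ n])
      (auto simp: prime_factors_multiplicity)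
  also have "\<dots> \<le> (\<Prod>p\<in>?P. ?h p)"
    by (rule prod_le_prod_superset_nat[OF fin \<open>prime_factors ?C \<subseteq> ?P\<close>])
      (use n prime_ge_1_nat in auto)
  also have "\<dots> = (\<Prod>p\<in>{p\<in>?P. p*p \<le> 2*n}. 2*n) * \<Prod>{p\<in>?P. 3*p \<le> 2*n} * \<Prod>{p\<in>?P. n < p}"
    by (simp only: prod.distrib prod.inter_filter[OF fin, symmetric])
  also have "{p\<in>?P. p*p \<le> 2*n} = {p. prime p \<and> p*p \<le> 2*n}"
    by (auto intro: order.trans[OF le_square])
  also have "{p\<in>?P. 3*p \<le> 2*n} = {p. prime p \<and> p \<le> 2*n div 3}"
    by auto
  also have "{p\<in>?P. n < p} = {p. prime p \<and> n < p \<and> p \<le> 2*n}"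
    by auto
  finally show ?thesis by simp
qed

lemma prod_primes_dvd:
  fixes x :: nat
  assumes "finite A" "\<forall>p\<in>A. prime p" "\<forall>p\<in>A. p dvd x"
  shows "\<Prod>A dvd x"
  using assms
proof (induction A rule: finite_induct)
  case (insert a A)
  have "\<not> a dvd \<Prod>A"
  proof
    assume "a dvd \<Prod>A"
    then obtain q where "q \<in> A" "a dvd q"
      using prime_dvd_prod_iff[of A a id] insert by auto
    then show False using insert primes_dvd_imp_eq[of a q] by auto
  qed
  then have "coprime a (\<Prod>A)" using insert by (intro prime_imp_coprime) auto
  then show ?case using insert by (simp add: divides_mult)
qed simp

lemma prime_dvd_middle_binomial_odd:
  fixes p k :: nat
  assumes p: "prime p" and "k+1 < p" "p \<le> 2*k+1"
  shows "p dvd (2*k+1) choose k"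
proof -
  have "fact k * fact (k+1) * ((2*k+1) choose k) = (fact (2*k+1) :: nat)"
    using binomial_fact_lemma[of k "2*k+1"] by (simp add: numeral_2_eq_2)
  moreover have "p dvd (fact (2*k+1) :: nat)"
    unfolding prime_dvd_fact_iff[OF p] using assms by linarith
  moreover have "\<not> p dvd (fact k :: nat)" "\<not> p dvd (fact (k+1) :: nat)"
    unfolding prime_dvd_fact_iff[OF p] using assms by linarith+
  ultimately show ?thesis using prime_dvd_mult_iff[OF p] by metis
qed

lemma middle_binomial_odd_le: "(2*k+1) choose k \<le> 4 ^ k"
proof -
  have "((2*k+1) choose k) + ((2*k+1) choose (k+1)) = (\<Sum>i\<in>{k,k+1}. (2*k+1) choose i)" by simp
  also have "\<dots> \<le> (\<Sum>i\<le>2*k+1. (2*k+1) choose i)" by (intro sum_mono2) auto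
  also have "\<dots> = 2 ^ (2*k+1)" by (rule choose_row_sum)
  also have "\<dots> = 2 * 4 ^ k" by (simp add: power_mult)
  finally show ?thesis using binomial_symmetric[of k "2*k+1"] by simp
qed

lemma prod_primes_between_le:
  fixes k :: nat
  shows "\<Prod>{p. prime p \<and> k+1 < p \<and> p \<le> 2*k+1} \<le> 4 ^ k"
proof -
  let ?R = "{p. prime p \<and> k+1 < p \<and> p \<le> 2*k+1}"
  have "finite ?R" by (rule finite_subset[of _ "{..2*k+1}"]) auto
  moreover have "\<forall>p\<in>?R. p dvd (2*k+1) choose k" using prime_dvd_middle_binomial_odd by blast
  ultimately have "\<Prod>?R dvd (2*k+1) choose k" by (intro prod_primes_dvd) auto
  then have "\<Prod>?R \<le> (2*k+1) choose k" by (rule dvd_imp_le) simp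
  then show ?thesis using middle_binomial_odd_le[of k] by simp
qed

lemma primorial_le_4_pow: "\<Prod>{p::nat. prime p \<and> p \<le> m} \<le> 4 ^ m"
proof (induction m rule: less_induct)
  case (less m)
  consider "m \<le> 2" | "2 < m" "even m" | k where "2 < m" "m = 2*k+1"
    by (cases "m \<le> 2"; cases "even m") (auto elim: oddE)
  then show ?case
  proof cases
    case 1
    show ?thesis
    proof (cases "m = 2")
      case True
      then have "{p::nat. prime p \<and> p \<le> m} = {2}" by (auto dest: prime_ge_2_nat)
      then show ?thesis using True by simp
    next
      case False
      then have "{p::nat. prime p \<and> p \<le> m} = {}" using 1 by (auto dest: prime_ge_2_nat)
      then show ?thesis by (simp only: prod.empty) simp
    qed
  next
    case 2
    then have "\<not> prime m" using prime_odd_nat[of m] by auto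
    then have "prime p \<and> p \<le> m \<longleftrightarrow> prime p \<and> p \<le> m - 1" for p by (cases "p = m") auto
    then have "\<Prod>{p::nat. prime p \<and> p \<le> m} \<le> 4 ^ (m - 1)" using less.IH[of "m - 1"] 2 by simp
    also have "\<dots> \<le> 4 ^ m" by (rule power_increasing) auto
    finally show ?thesis .
  next
    case 3
    let ?R = "{p. prime p \<and> k+1 < p \<and> p \<le> 2*k+1}"
    have "{p::nat. prime p \<and> p \<le> m} = {p. prime p \<and> p \<le> k+1} \<union> ?R"
      using 3 by auto
    moreover have "finite {p::nat. prime p \<and> p \<le> k+1}" "finite ?R" by simp_all
    ultimately have "\<Prod>{p::nat. prime p \<and> p \<le> m} = \<Prod>{p. prime p \<and> p \<le> k+1} * \<Prod>?R"
      by (simp add: prod.union_disjoint disjoint_iff)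
    also have "\<dots> \<le> 4 ^ (k+1) * 4 ^ k"
      using less.IH[of "k+1"] 3 prod_primes_between_le[of k] by (intro mult_le_mono) auto
    also have "\<dots> = 4 ^ m" using 3 by (simp flip: power_add)
    finally show ?thesis .
  qed
qed

lemma four_pow_le_central_binomial: "4 ^ n \<le> (2*n+1) * ((2*n) choose n)"
proof -
  have "(4::nat) ^ n = (\<Sum>i\<le>2*n. (2*n) choose i)" by (simp add: choose_row_sum power_mult)
  also have "\<dots> \<le> (\<Sum>i\<le>2*n. (2*n) choose n)" by (intro sum_mono binomial_maximum')
  finally show ?thesis by simp
qed

lemma succ_pow_lt_two_pow_square:
  fixes k :: nat
  assumes k: "64 \<le> k"
  shows "(k+1) ^ (6*k+12) < 2 ^ (k*k)"
proof -
  obtain j where j: "2 ^ j \<le> k+1" "k+1 < 2 ^ (j+1)" using ex_power_ivl1[of 2 "k+1"] by auto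
  have "6 \<le> j"
  proof (rule ccontr)
    assume "\<not> 6 \<le> j"
    then have "(2::nat) ^ (j+1) \<le> 2 ^ 6" by (intro power_increasing) auto
    then show False using j k by simp
  qed
  have "8 * (j+1) \<le> 2 ^ j"
    using \<open>6 \<le> j\<close> by (induction j rule: dec_induct) simp_all
  then have j8: "8 * (j+1) \<le> k+1" using j by simp
  have "(k+1) ^ (6*k+12) < (2 ^ (j+1)) ^ (6*k+12)" using j by (intro power_strict_mono) auto
  also have "\<dots> = 2 ^ ((j+1) * (6*k+12))" by (simp only: power_mult)
  also have "\<dots> \<le> 2 ^ (k*k)"
  proof (intro power_increasing)
    have "8 * ((j+1) * (6*k+12)) \<le> (k+1) * (6*k+12)"
      using j8 by (simp only: mult.assoc[symmetric] mult_le_mono1)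
    also have "\<dots> \<le> 8 * (k*k)"
    proof -
      have "64 * k \<le> k * k" using k by (intro mult_right_mono) auto
      moreover have "(k+1) * (6*k+12) = 6*(k*k) + 18*k + 12" by (simp add: algebra_simps)
      ultimately show ?thesis using k by linarith
    qed
    finally show "(j+1) * (6*k+12) \<le> k*k" by simp
  qed simp
  finally show ?thesis .
qed

lemma erdos_bound_lt_four_pow:
  fixes n k :: nat
  assumes n: "2048 \<le> n" and k: "k*k \<le> 2*n" "2*n < (k+1)*(k+1)"
  shows "(2*n+1) * (2*n) ^ (k+1) * 4 ^ (2*n div 3) < 4 ^ n"
proof -
  define X where "X = (2*n+1) * (2*n) ^ (k+1)"
  define t where "t = 2*n div 3"
  have "64 \<le> k"
  proof (rule ccontr)
    assume "\<not> 64 \<le> k"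
    then have "(k+1)*(k+1) \<le> 64*64" by (intro mult_le_mono) auto
    then show False using k n by simp
  qed
  have "2*n+1 \<le> (k+1)^2" "2*n \<le> (k+1)^2" using k(2) by (simp_all add: power2_eq_square)
  then have "X \<le> (k+1)^2 * ((k+1)^2) ^ (k+1)" unfolding X_def by (intro mult_le_mono power_mono) auto
  also have "\<dots> = (k+1) ^ (2 + 2*(k+1))" by (simp only: power_mult[symmetric] power_add[symmetric])
  also have "\<dots> = (k+1) ^ (2*k+4)" by (rule arg_cong[where f = "\<lambda>e. (k+1) ^ e"]) simp
  finally have "X ^ 3 \<le> ((k+1) ^ (2*k+4)) ^ 3" by (rule power_mono) simp
  also have "\<dots> = (k+1) ^ ((2*k+4) * 3)" by (simp only: power_mult)
  also have "\<dots> = (k+1) ^ (6*k+12)" by (rule arg_cong[where f = "\<lambda>e. (k+1) ^ e"]) simp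
  also have "\<dots> < 2 ^ (k*k)" by (rule succ_pow_lt_two_pow_square[OF \<open>64 \<le> k\<close>])
  also have "\<dots> \<le> 2 ^ (2*n)" using k(1) by (intro power_increasing) auto
  also have "\<dots> = 4 ^ n" by (simp add: power_mult)
  also have "\<dots> \<le> 4 ^ (3 * (n - t))" unfolding t_def by (intro power_increasing) auto
  also have "\<dots> = (4 ^ (n - t)) ^ 3" by (simp add: power_mult mult.commute)
  finally have "X < 4 ^ (n - t)" by (rule power_less_imp_less_base) simp
  then have "X * 4 ^ t < 4 ^ (n - t) * 4 ^ t" by simp
  also have "\<dots> = 4 ^ n" unfolding t_def by (simp flip: power_add)
  finally show ?thesis unfolding X_def t_def .
qed

lemma card_primes_square_le:
  fixes N k :: nat
  assumes "N < (k+1)*(k+1)"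
  shows "card {p. prime p \<and> p*p \<le> N} \<le> k"
proof -
  have "p \<le> k" if "p*p \<le> N" for p
  proof (rule ccontr)
    assume "\<not> p \<le> k"
    then have "(k+1)*(k+1) \<le> p*p" by (intro mult_le_mono) auto
    with that assms show False by simp
  qed
  then have "{p. prime p \<and> p*p \<le> N} \<subseteq> {1..k}" using prime_ge_1_nat by auto
  then show ?thesis using card_mono[of "{1..k}"] by fastforce
qed

lemma two_primes_between_large:
  fixes n :: nat
  assumes n: "2048 \<le> n"
  shows "\<exists>p1 p2. prime p1 \<and> prime p2 \<and> n < p1 \<and> p1 < p2 \<and> p2 \<le> 2*n"
proof (rule ccontr)
  assume no_two: "\<not> ?thesis"
  define R where "R = {p::nat. prime p \<and> n < p \<and> p \<le> 2*n}"
  have "\<Prod>R \<le> 2*n"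
  proof (cases "R = {}")
    case False
    then obtain q where q: "q \<in> R" by blast
    have "R = {q}"
    proof (intro equalityI subsetI)
      fix x assume "x \<in> R"
      show "x \<in> {q}"
      proof (rule ccontr)
        assume "x \<notin> {q}"
        then have "x < q \<or> q < x" by auto
        then show False using no_two \<open>x \<in> R\<close> q unfolding R_def by auto
      qed
    qed (use q in simp)
    moreover have "q \<le> 2*n" using q unfolding R_def by simp
    ultimately show ?thesis by simp
  qed (use n in simp)
  define k where "k = floor_sqrt (2*n)"
  have k: "k*k \<le> 2*n" "2*n < (k+1)*(k+1)"
    unfolding k_def using floor_sqrt_power2_le[of "2*n"] Suc_floor_sqrt_power2_gt[of "2*n"]
    by (simp_all add: power2_eq_square)
  have "(2*n) ^ card {p. prime p \<and> p*p \<le> 2*n} \<le> (2*n) ^ k"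
    using card_primes_square_le[OF k(2)] n by (intro power_increasing) auto
  moreover have "(2*n) choose n \<le> (2*n) ^ card {p. prime p \<and> p*p \<le> 2*n}
      * \<Prod>{p. prime p \<and> p \<le> 2*n div 3} * \<Prod>R"
    unfolding R_def by (rule central_binomial_le_prime_products) (use n in simp)
  ultimately have "(2*n) choose n \<le> (2*n) ^ k * 4 ^ (2*n div 3) * (2*n)"
    using primorial_le_4_pow[of "2*n div 3"] \<open>\<Prod>R \<le> 2*n\<close>
    by (elim order.trans) (intro mult_le_mono)
  then have "4 ^ n \<le> (2*n+1) * ((2*n) ^ k * 4 ^ (2*n div 3) * (2*n))"
    using four_pow_le_central_binomial[of n] by (meson mult_le_mono2 order.trans)
  also have "\<dots> = (2*n+1) * (2*n) ^ (k+1) * 4 ^ (2*n div 3)" by (simp add: algebra_simps)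
  finally show False using erdos_bound_lt_four_pow[OF n k] by simp
qed

lemma two_primes_between:
  fixes n :: nat
  assumes "1 \<le> n"
  shows "\<exists>p1 p2. prime p1 \<and> prime p2 \<and> n < p1 \<and> p1 < p2 \<and> p2 \<le> 2*n+1"
proof (cases "n < 2179")
  case True
  then show ?thesis using two_primes_between_small assms by blast
next
  case False
  then obtain p1 p2 where "prime p1" "prime p2" "n < p1" "p1 < p2" "p2 \<le> 2*n"
    using two_primes_between_large[of n] by auto
  then show ?thesis by (intro exI[of _ p1] exI[of _ p2]) simp
qed

lemma bertrand_postulate:
  fixes n :: nat
  assumes "1 \<le> n"
  shows "\<exists>p. prime p \<and> n < p \<and> p \<le> 2*n"
proof -
  obtain p1 p2 where "prime p1" "n < p1" "p1 < p2" "p2 \<le> 2*n+1"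
    using two_primes_between[OF assms] by blast
  then show ?thesis by (intro exI[of _ p1]) simp
qed

section \<open>The two smallest primes above \<open>r\<close>\<close>

definition next_prime :: "nat \<Rightarrow> nat" where
  "next_prime n = (LEAST q. prime q \<and> n < q)"

lemma next_prime: "prime (next_prime n)" "n < next_prime n"
  using LeastI_ex[OF bigger_prime[of n]] unfolding next_prime_def by auto

lemma next_prime_le: "prime q \<Longrightarrow> n < q \<Longrightarrow> next_prime n \<le> q"
  unfolding next_prime_def by (rule Least_le) simp

lemma next_prime_eqI:
  assumes "a \<le> c" "c < next_prime a"
  shows "next_prime c = next_prime a"
  using assms next_prime[of a] next_prime[of c] next_prime_le[of "next_prime a" c]
    next_prime_le[of "next_prime c" a]
  by simp

lemma next_prime_le_double: "1 \<le> n \<Longrightarrow> next_prime n \<le> 2*n"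
  using bertrand_postulate next_prime_le by (meson order.trans)

lemma next_next_prime_le:
  assumes "1 \<le> n"
  shows "next_prime (next_prime n) \<le> 2*n + 1"
proof -
  obtain p1 p2 where "prime p1" "prime p2" "n < p1" "p1 < p2" "p2 \<le> 2*n+1"
    using two_primes_between[OF assms] by blast
  then have "next_prime n < p2" using next_prime_le[of p1 n] by simp
  then show ?thesis using next_prime_le[OF \<open>prime p2\<close>] \<open>p2 \<le> 2*n+1\<close> by (meson order.trans)
qed

lemma nth_prime_Suc: "nth_prime (Suc i) = enumerate {p. prime p} i"
  by (simp add: nth_prime_def)

lemma nth_prime_1: "nth_prime 1 = 2"
  unfolding nth_prime_def by (simp add: enumerate_0, rule Least_equality) (auto dest: prime_ge_2_nat)

lemma nth_prime_Suc_Suc: "nth_prime (Suc (Suc i)) = next_prime (nth_prime (Suc i))"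
  by (simp add: nth_prime_Suc enumerate_Suc''[OF primes_infinite] next_prime_def)

lemma nth_prime_Suc_b:
  fixes r :: nat
  assumes "0 < r"
  shows "nth_prime (Suc (b r)) = next_prime r"
proof (cases "r = 1")
  case True
  have "next_prime 1 = 2"
    unfolding next_prime_def by (rule Least_equality) (auto dest: prime_ge_2_nat)
  then show ?thesis using True nth_prime_1 by (simp add: b_def)
next
  case False
  let ?P = "\<lambda>k. k \<ge> 1 \<and> nth_prime k \<le> r"
  have bounded: "k \<le> r + 1" if "?P k" for k
    using that le_enumerate[OF primes_infinite, of "k - 1"] by (cases k) (auto simp: nth_prime_Suc)
  have "?P 1" using False assms nth_prime_1 by simp
  then have "?P (b r)" "\<not> ?P (Suc (b r))"
    using False GreatestI_nat[of ?P 1 "r+1"] Greatest_le_nat[of ?P "Suc (b r)" "r+1"] bounded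
    by (auto simp: b_def)
  then obtain g where g: "b r = Suc g" "nth_prime (Suc g) \<le> r" "r < nth_prime (Suc (Suc g))"
    by (cases "b r") auto
  then show ?thesis
    using next_prime_eqI[of "nth_prime (Suc g)" r] by (simp add: nth_prime_Suc_Suc)
qed

section \<open>Lower bounds for \<open>S\<^sub>r\<close>\<close>

lemma S_prime:
  fixes q r :: nat
  assumes "prime q"
  shows "S r q = (if q \<le> r then 0 else q - r)"
  using assms by (simp add: S_def prime_prime_factors)

lemma S_mult_primes:
  fixes a c r :: nat
  assumes "prime a" "prime c" "a \<noteq> c" "r < a" "r < c"
  shows "S r (a*c) = (a - r) * (c - r)"
proof -
  have "prime_factors (a*c) = {a, c}"
    using assms by (simp add: prime_factors_product prime_prime_factors prime_gt_0_nat insert_commute)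
  moreover have "multiplicity a (a*c) = 1" "multiplicity c (a*c) = 1"
    using assms by (simp_all add: prime_elem_multiplicity_mult_distrib prime_multiplicity_other prime_gt_0_nat)
  ultimately show ?thesis using assms unfolding S_def by simp
qed

lemma mult_primes_in_B:
  fixes a c r :: nat
  assumes "prime a" "prime c" "a \<noteq> c" "r < a" "r < c"
  shows "a * c \<in> B r"
  using assms S_mult_primes[OF assms] by (simp add: B_def prime_gt_0_nat)

lemma prime_factor_gt_if_in_B:
  fixes m r :: nat
  assumes "m \<in> B r" "q \<in> prime_factors m"
  shows "r < q"
proof (rule ccontr)
  assume "\<not> r < q"
  then have "S r m = 0"
    unfolding S_def by (intro prod_zero bexI[of _ q]) (use assms(2) \<open>\<not> r < q\<close> in auto)
  then show False using assms(1) by (simp add: B_def)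
qed

lemma prod_factors_le_S:
  fixes m r :: nat
  assumes "m \<in> B r" "T \<subseteq> prime_factors m"
  shows "(\<Prod>q\<in>T. q ^ (multiplicity q m - 1) * (q - r)) \<le> S r m"
proof -
  have gt: "r < q" if "q \<in> prime_factors m" for q using prime_factor_gt_if_in_B[OF assms(1) that] .
  have one_le: "1 \<le> (if q \<le> r then 0 else q ^ (multiplicity q m - 1) * (q - r))"
    if "q \<in> prime_factors m" for q
    using gt[OF that] by (simp add: Suc_le_eq)
  have "(\<Prod>q\<in>T. q ^ (multiplicity q m - 1) * (q - r)) =
        (\<Prod>q\<in>T. if q \<le> r then 0 else q ^ (multiplicity q m - 1) * (q - r))"
    using assms(2) gt by (intro prod.cong) auto
  also have "\<dots> \<le> S r m"
    unfolding S_def by (rule prod_le_prod_superset_nat[OF _ assms(2)]) (use one_le in auto)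
  finally show ?thesis .
qed

lemma S_prime_power:
  fixes q r v :: nat
  assumes "prime q" "r < q" "0 < v"
  shows "S r (q ^ v) = q ^ (v - 1) * (q - r)"
  using assms by (simp add: S_def prime_factorization_prime_power)

lemma S_ge_two_factors:
  fixes m r a c :: nat
  assumes "m \<in> B r" "a \<in> prime_factors m" "c \<in> prime_factors m" "a \<noteq> c"
  shows "(a - r) * (c - r) \<le> S r m"
proof -
  have "z - r \<le> z ^ (multiplicity z m - 1) * (z - r)" if "z \<in> prime_factors m" for z
    using that by (auto simp: prime_factors_multiplicity prime_gt_0_nat)
  then have "(a - r) * (c - r) \<le> (\<Prod>z\<in>{a, c}. z ^ (multiplicity z m - 1) * (z - r))"
    using assms(2-4) by (simp add: mult_le_mono)
  also have "\<dots> \<le> S r m" by (rule prod_factors_le_S) (use assms in auto)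
  finally show ?thesis .
qed

lemma S_ge_if_not_prime:
  fixes m r :: nat
  assumes r: "0 < r" and m: "m \<in> B r" "1 < m" "\<not> prime m"
  shows "(next_prime r - r) * (next_prime (next_prime r) - r) \<le> S r m"
proof -
  define q1 where "q1 = next_prime r"
  define q2 where "q2 = next_prime q1"
  have factor_ge: "q1 \<le> q" if "q \<in> prime_factors m" for q
    unfolding q1_def using that prime_factor_gt_if_in_B[OF m(1) that]
    by (auto intro: next_prime_le)
  obtain q where q: "q \<in> prime_factors m"
    using m(2) prime_factor_nat[of m] by (auto simp: in_prime_factors_iff)
  have "(q1 - r) * (q2 - r) \<le> S r m"
  proof (cases "prime_factors m = {q}")
    case False
    then obtain q' where q': "q' \<in> prime_factors m" "q' \<noteq> q" using q by blast
    define lo hi where "lo = min q q'" and "hi = max q q'"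
    have lo_hi: "lo \<in> prime_factors m" "hi \<in> prime_factors m" "lo < hi"
      unfolding lo_def hi_def using q q' by (auto simp: min_def max_def)
    have "q1 \<le> lo" by (rule factor_ge[OF lo_hi(1)])
    with lo_hi have "q2 \<le> hi" unfolding q2_def by (auto intro: next_prime_le)
    with \<open>q1 \<le> lo\<close> have "(q1 - r) * (q2 - r) \<le> (lo - r) * (hi - r)" by (intro mult_le_mono) auto
    also have "\<dots> \<le> S r m" using S_ge_two_factors[OF m(1) lo_hi(1,2)] lo_hi(3) by simp
    finally show ?thesis .
  next
    case True
    define v where "v = multiplicity q m"
    have "m = q ^ v"
      using prime_factorization_nat[of m] m(2) unfolding True v_def by simp
    moreover have "v \<noteq> 0" "v \<noteq> 1"
      using \<open>m = q ^ v\<close> m(2,3) q by (auto simp: prime_factors_multiplicity)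
    ultimately have "S r m = q ^ (v - 1) * (q - r)" and "q \<le> q ^ (v - 1)"
      using S_prime_power[of q r v] prime_factor_gt_if_in_B[OF m(1) q] q
      by (auto simp: prime_factors_multiplicity intro: self_le_power)
    have "q2 \<le> 2*r + 1" "r < q1" using next_next_prime_le[of r] next_prime[of r] r
      unfolding q1_def q2_def by simp_all
    then have "q2 - r \<le> q" using factor_ge[OF q] by linarith
    then have "(q1 - r) * (q2 - r) \<le> (q - r) * q ^ (v - 1)"
      using factor_ge[OF q] \<open>q \<le> q ^ (v - 1)\<close> by (intro mult_le_mono) auto
    then show ?thesis using \<open>S r m = q ^ (v - 1) * (q - r)\<close> by (simp add: mult.commute)
  qed
  then show ?thesis by (simp add: q1_def q2_def)
qed

lemma in_B_above_with_S_le: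
  fixes p r :: nat
  assumes r: "0 < r" and p: "(next_prime r - r) * (next_prime (next_prime r) - r) + r \<le> p"
  shows "\<exists>m\<in>B r. p < m \<and> S r m \<le> p - r"
proof -
  define q1 where "q1 = next_prime r"
  define q2 where "q2 = next_prime q1"
  have q1: "prime q1" "r < q1" "q1 \<le> 2*r" and q2: "prime q2" "q1 < q2"
    using next_prime[of r] next_prime[of q1] next_prime_le_double[of r] r
    unfolding q1_def q2_def by simp_all
  show ?thesis
  proof (cases "p < q1 * q2")
    case True
    have "q1 * q2 \<in> B r" "S r (q1 * q2) = (q1 - r) * (q2 - r)"
      using mult_primes_in_B[of q1 q2 r] S_mult_primes[of q1 q2 r] q1 q2 by simp_all
    then show ?thesis using True p unfolding q1_def q2_def by auto
  next
    case False
    define n where "n = p div q1"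
    have "q2 * q1 div q1 \<le> n" unfolding n_def using False by (intro div_le_mono) (simp add: mult.commute)
    then have "q2 \<le> n" using q1 by simp
    then obtain x where x: "prime x" "n < x" "x \<le> 2*n" using bertrand_postulate[of n] q2 by auto
    have "q1 < x" "r < x" using \<open>q2 \<le> n\<close> x(2) q1(2) q2(2) by simp_all
    then have "q1 * x \<in> B r" "S r (q1 * x) = (q1 - r) * (x - r)"
      using mult_primes_in_B[of q1 x r] S_mult_primes[of q1 x r] q1 x(1) by simp_all
    moreover have "p < q1 * x"
    proof -
      have "p < q1 * Suc n" unfolding n_def using q1(2) by (simp add: dividend_less_times_div)
      also have "\<dots> \<le> q1 * x" using x(2) by (intro mult_le_mono2) simp
      finally show ?thesis .
    qed
    moreover have "(q1 - r) * (x - r) \<le> p - r"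
    proof -
      have "(q1 - r) * x \<le> (q1 - r) * (2*n)" using x(3) by simp
      also have "\<dots> \<le> q1 * n"
        using mult_le_mono1[of "2 * (q1 - r)" q1 n] q1(3) by (simp add: algebra_simps)
      also have "\<dots> \<le> p" unfolding n_def by simp
      finally have "(q1 - r) * x \<le> p" .
      moreover have "(q1 - r) * (x - r) + r \<le> (q1 - r) * x"
      proof -
        have "(q1 - r) * (x - r) + (q1 - r) * r = (q1 - r) * x"
          using \<open>r < x\<close> by (simp flip: add_mult_distrib2)
        moreover have "1 * r \<le> (q1 - r) * r" using q1(2) by (intro mult_le_mono1) linarith
        ultimately show ?thesis by linarith
      qed
      ultimately show ?thesis by linarith
    qed
    ultimately show ?thesis by auto
  qed
qed

lemma prime_in_F_iff:
  fixes p r :: nat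
  assumes p: "prime p" and r: "0 < r"
  shows "p \<in> F r \<longleftrightarrow> r < p \<and> p < (next_prime r - r) * (next_prime (next_prime r) - r) + r"
    (is "_ \<longleftrightarrow> _ \<and> p < ?prod + r")
proof
  assume "p \<in> F r"
  then have "p \<in> B r" and least: "\<And>m. m \<in> B r \<Longrightarrow> p < m \<Longrightarrow> S r p < S r m"
    by (auto simp: F_def)
  then have "r < p" using S_prime[OF p] by (auto simp: B_def split: if_splits)
  moreover have "p < ?prod + r"
  proof (rule ccontr)
    assume "\<not> p < ?prod + r"
    then have "?prod + r \<le> p" by simp
    then obtain m where "m \<in> B r" "p < m" "S r m \<le> p - r"
      using in_B_above_with_S_le[OF r] by blast
    then show False using least S_prime[OF p] \<open>r < p\<close> by fastforce
  qed
  ultimately show "r < p \<and> p < ?prod + r" ..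
next
  assume "r < p \<and> p < ?prod + r"
  then have rp: "r < p" and below: "p < ?prod + r" by auto
  then have S_p: "S r p = p - r" using S_prime[OF p] by simp
  have "S r p < S r m" if "m \<in> B r" "p < m" for m
  proof (cases "prime m")
    case True
    then have "S r m = m - r" using S_prime[OF True] rp \<open>p < m\<close> by simp
    then show ?thesis using S_p rp \<open>p < m\<close> by linarith
  next
    case False
    then have "?prod \<le> S r m"
      using S_ge_if_not_prime[OF r \<open>m \<in> B r\<close>] \<open>p < m\<close> prime_gt_1_nat[OF p] by simp
    moreover have "p - r < ?prod" using below rp by (simp add: less_diff_conv2)
    ultimately show ?thesis using S_p by linarith
  qed
  moreover have "p \<in> B r" using S_p rp by (simp add: B_def prime_gt_0_nat[OF p])
  ultimately show "p \<in> F r" by (simp add: F_def)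
qed

theorem theorem3p1:
  fixes p r :: nat
  assumes "prime p" and "r > 0"
  shows "p \<in> F r \<longleftrightarrow>
    r < p \<and> p < (nth_prime (b r + 1) - r) * (nth_prime (b r + 2) - r) + r"
proof -
  have "nth_prime (b r + 1) = next_prime r" "nth_prime (b r + 2) = next_prime (next_prime r)"
    using nth_prime_Suc_b[OF assms(2)] nth_prime_Suc_Suc[of "b r"] by simp_all
  then show ?thesis using prime_in_F_iff[OF assms] by simp
qed

end
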